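(* Let $\mathcal{A}=(A,B,s,t,\Delta)$ be a left multiplier bialgebroid and $B_0\subseteq B$ a two-sided ideal with $s(B_0)A=A=t(B_0)A$; let $s_0,t_0$ be the restrictions of $s,t$ to $B_0$. Then the natural map ${}_{B_0}A\otimes A^{B_0}\to{}_BA\otimes A^B$ is an isomorphism. Let $\Delta_0$ be the composition of $\Delta$ with the induced isomorphism $A\bar\times_BA\to A\bar\times_{B_0}A$. Then $\mathcal{A}_0=(A,B_0,s_0,t_0,\Delta_0)$ is a left multiplier bialgebroid, and every left counit for $\mathcal{A}$ takes values in $B_0$ and is a left counit for $\mathcal{A}_0$.
   Context: All algebras are associative complex algebras, not necessarily unital. For an algebra $A$ with $A_A$ non-degenerate, $L(A)$ denotes right $A$-module endomorphisms of $A$ (containing $A$ via left multiplication) and $M(A)=\{T\in L(A):aT\in A\ \forall a\}$. For an algebra $D$ with a homomorphism $s\colon D\to M(A)$ and anti-homomorphism $t\colon D\to M(A)$, ${}_DA\otimes A^D$ denotes the quotient of $A\otimes A$ by the span of $s(x)a\otimes b-a\otimes t(x)b$ ($x\in D$), and $A\bar\times_DA$ the algebra of linear endomorphisms $T$ of ${}_DA\otimes A^D$ such that for all $a,b\in A$ there are $T(a\otimes1),T(1\otimes b)\in{}_DA\otimes A^D$ with $T(a\otimes b)=T(a\otimes1)(1\otimes b)=T(1\otimes b)(a\otimes1)$. A left multiplier bialgebroid is a tuple $(A,B,s,t,\Delta)$: (i) $A,B$ algebras, $A_A$ non-degenerate and idempotent; (ii) $s\colon B\to M(A)$ homomorphism,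 $t\colon B\to M(A)$ anti-homomorphism with commuting images, $s,t$ injective, $s(B)A=A=t(B)A$; ${}_BA\otimes A^B$ is non-degenerate as a right module over $A\otimes1$ and over $1\otimes A$; (iii) $\Delta\colon A\to A\bar\times_BA$ is an algebra homomorphism; (iv) $\Delta(s(x)t(y)as(x')t(y'))=(t(y)\otimes s(x))\Delta(a)(t(y')\otimes s(x'))$; (v) if $\Delta(b)(1\otimes c)=\sum p_i\otimes q_i$ and $\Delta(b)(a\otimes1)=\sum u_j\otimes v_j$ then $\sum\Delta(p_i)(a\otimes1)\otimes q_i=\sum u_j\otimes\Delta(v_j)(1\otimes c)$ in $A^{\otimes3}$ modulo the span of $s(x)a\otimes b\otimes c-a\otimes t(x)b\otimes c$ and $a\otimes s(x)b\otimes c-a\otimes b\otimes t(x)c$. Canonical maps $T_\lambda(a\otimes b)=\Delta(b)(a\otimes1)$, $T_\rho(a\otimes b)=\Delta(a)(1\otimes b)$. A left counit is a linear $\varepsilon\colon A\to B$ with $\varepsilon(s(x)a)=x\varepsilon(a)$, $\varepsilon(t(y)a)=\varepsilon(a)y$, $\sum t(\varepsilon(c_i))d_i=ab$ whenever $T_\rho(a\otimes b)=\sum c_i\otimes d_i$, and $\sum s(\varepsilon(d_i))c_i=ba$ whenever $T_\lambda(a\otimes b)=\sum c_i\otimes d_i$. *)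

theory Defs
  imports Complex_Main
begin

definition calg :: "(complex \<Rightarrow> 'a::ring \<Rightarrow> 'a) \<Rightarrow> bool" where
  "calg sc \<longleftrightarrow> vector_space sc \<and>
     (\<forall>c x y. sc c (x * y) = sc c x * y \<and> sc c (x * y) = x * sc c y)"

definition subalg :: "(complex \<Rightarrow> 'b::ring \<Rightarrow> 'b) \<Rightarrow> 'b set \<Rightarrow> bool" where
  "subalg sc D \<longleftrightarrow> 0 \<in> D \<and> (\<forall>x\<in>D. \<forall>y\<in>D. x + y \<in> D \<and> x * y \<in> D) \<and>
     (\<forall>x\<in>D. \<forall>c. sc c x \<in> D)"

definition two_sided_ideal :: "(complex \<Rightarrow> 'b::ring \<Rightarrow> 'b) \<Rightarrow> 'b set \<Rightarrow> bool" where
  "two_sided_ideal sc I \<longleftrightarrow> 0 \<in> I \<and> (\<forall>x\<in>I. \<forall>y\<in>I. x + y \<in> I) \<and>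
     (\<forall>x\<in>I. \<forall>c. sc c x \<in> I) \<and> (\<forall>x\<in>I. \<forall>y. x * y \<in> I \<and> y * x \<in> I)"

definition right_nondeg :: "'a::ring itself \<Rightarrow> bool" where
  "right_nondeg _ \<longleftrightarrow> (\<forall>a::'a. (\<forall>b. a * b = 0) \<longrightarrow> a = 0)"

definition idempotent_alg :: "'a::ring itself \<Rightarrow> bool" where
  "idempotent_alg _ \<longleftrightarrow> (\<forall>a::'a. \<exists>l. a = sum_list (map (\<lambda>(x, y). x * y) l))"

text \<open>L(A): right A-module endomorphisms of A (products in L(A) are composition; A sits in
  L(A) via left multiplication).\<close>
definition inL :: "(complex \<Rightarrow> 'a::ring \<Rightarrow> 'a) \<Rightarrow> ('a \<Rightarrow> 'a) \<Rightarrow> bool" where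
  "inL sc T \<longleftrightarrow> (\<forall>x y. T (x + y) = T x + T y) \<and> (\<forall>c x. T (sc c x) = sc c (T x)) \<and>
     (\<forall>a b. T (a * b) = T a * b)"

text \<open>M(A) = {T in L(A) : a T in A for all a}, where a T is the composite of left
  multiplication by a with T.\<close>
definition inM :: "(complex \<Rightarrow> 'a::ring \<Rightarrow> 'a) \<Rightarrow> ('a \<Rightarrow> 'a) \<Rightarrow> bool" where
  "inM sc T \<longleftrightarrow> inL sc T \<and> (\<forall>a. \<exists>c. \<forall>b. a * T b = c * b)"

definition rmul :: "'a::ring \<Rightarrow> ('a \<Rightarrow> 'a) \<Rightarrow> 'a" where
  "rmul a T = (THE c. \<forall>b. c * b = a * T b)"

text \<open>f(D) A = A: every element of A is a finite sum of elements f x b with x in D.\<close>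
definition gen_by :: "'b set \<Rightarrow> ('b \<Rightarrow> 'a \<Rightarrow> 'a::ring) \<Rightarrow> bool" where
  "gen_by D f \<longleftrightarrow> (\<forall>a. \<exists>l. (\<forall>x\<in>fst ` set l. x \<in> D) \<and> a = sum_list (map (\<lambda>(x, b). f x b) l))"

text \<open>Elements of A (x) A (resp. A (x) A (x) A) are represented by finite formal sums, i.e.
  lists of pairs (triples) of elements of A; scalars are absorbed in the first factor.
  fv maps a list to the corresponding element of the free complex vector space on A x A.\<close>
definition fv :: "'k list \<Rightarrow> 'k \<Rightarrow> complex" where
  "fv xs = (\<lambda>k. of_nat (count_list xs k))"

definition cspan :: "('k \<Rightarrow> complex) set \<Rightarrow> ('k \<Rightarrow> complex) set" where
  "cspan S = {f. \<exists>l. (\<forall>g\<in>snd ` set l. g \<in> S) \<and> f = (\<lambda>k. sum_list (map (\<lambda>(c, g). c * g k) l))}"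

text \<open>Relations defining _D A (x) A^D: bilinearity relations (giving A (x) A) together with
  s(x)a (x) b - a (x) t(x)b for x in D.\<close>
definition rel2 :: "(complex \<Rightarrow> 'a::ring \<Rightarrow> 'a) \<Rightarrow> 'b set \<Rightarrow> ('b \<Rightarrow> 'a \<Rightarrow> 'a) \<Rightarrow> ('b \<Rightarrow> 'a \<Rightarrow> 'a)
    \<Rightarrow> ('a \<times> 'a \<Rightarrow> complex) set" where
  "rel2 sc D s t =
     {\<lambda>k. fv [(a + a', b)] k - fv [(a, b)] k - fv [(a', b)] k | a a' b. True} \<union>
     {\<lambda>k. fv [(a, b + b')] k - fv [(a, b)] k - fv [(a, b')] k | a b b'. True} \<union>
     {\<lambda>k. fv [(sc c a, b)] k - c * fv [(a, b)] k | c a b. True} \<union>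
     {\<lambda>k. fv [(a, sc c b)] k - c * fv [(a, b)] k | c a b. True} \<union>
     {\<lambda>k. fv [(s x a, b)] k - fv [(a, t x b)] k | x a b. x \<in> D}"

definition tens_eq :: "(complex \<Rightarrow> 'a::ring \<Rightarrow> 'a) \<Rightarrow> 'b set \<Rightarrow> ('b \<Rightarrow> 'a \<Rightarrow> 'a) \<Rightarrow> ('b \<Rightarrow> 'a \<Rightarrow> 'a)
    \<Rightarrow> ('a \<times> 'a) list \<Rightarrow> ('a \<times> 'a) list \<Rightarrow> bool" where
  "tens_eq sc D s t xs ys \<longleftrightarrow> (\<lambda>k. fv xs k - fv ys k) \<in> cspan (rel2 sc D s t)"

definition rel3 :: "(complex \<Rightarrow> 'a::ring \<Rightarrow> 'a) \<Rightarrow> 'b set \<Rightarrow> ('b \<Rightarrow> 'a \<Rightarrow> 'a) \<Rightarrow> ('b \<Rightarrow> 'a \<Rightarrow> 'a)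
    \<Rightarrow> ('a \<times> 'a \<times> 'a \<Rightarrow> complex) set" where
  "rel3 sc D s t =
     {\<lambda>k. fv [(a + a', b, d)] k - fv [(a, b, d)] k - fv [(a', b, d)] k | a a' b d. True} \<union>
     {\<lambda>k. fv [(a, b + b', d)] k - fv [(a, b, d)] k - fv [(a, b', d)] k | a b b' d. True} \<union>
     {\<lambda>k. fv [(a, b, d + d')] k - fv [(a, b, d)] k - fv [(a, b, d')] k | a b d d'. True} \<union>
     {\<lambda>k. fv [(sc c a, b, d)] k - c * fv [(a, b, d)] k | c a b d. True} \<union>
     {\<lambda>k. fv [(a, sc c b, d)] k - c * fv [(a, b, d)] k | c a b d. True} \<union>
     {\<lambda>k. fv [(a, b, sc c d)] k - c * fv [(a, b, d)] k | c a b d. True} \<union>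
     {\<lambda>k. fv [(s x a, b, d)] k - fv [(a, t x b, d)] k | x a b d. x \<in> D} \<union>
     {\<lambda>k. fv [(a, s x b, d)] k - fv [(a, b, t x d)] k | x a b d. x \<in> D}"

definition tens3_eq :: "(complex \<Rightarrow> 'a::ring \<Rightarrow> 'a) \<Rightarrow> 'b set \<Rightarrow> ('b \<Rightarrow> 'a \<Rightarrow> 'a) \<Rightarrow> ('b \<Rightarrow> 'a \<Rightarrow> 'a)
    \<Rightarrow> ('a \<times> 'a \<times> 'a) list \<Rightarrow> ('a \<times> 'a \<times> 'a) list \<Rightarrow> bool" where
  "tens3_eq sc D s t xs ys \<longleftrightarrow> (\<lambda>k. fv xs k - fv ys k) \<in> cspan (rel3 sc D s t)"

text \<open>Operations on representatives: scalar multiplication, right multiplication by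
  (a (x) 1) and by (1 (x) b), and left multiplication by f (x) g for multipliers f, g.\<close>
definition tscale :: "(complex \<Rightarrow> 'a \<Rightarrow> 'a) \<Rightarrow> complex \<Rightarrow> ('a \<times> 'a) list \<Rightarrow> ('a \<times> 'a) list" where
  "tscale sc c xs = map (\<lambda>(p, q). (sc c p, q)) xs"

definition rm1 :: "'a::ring \<Rightarrow> ('a \<times> 'a) list \<Rightarrow> ('a \<times> 'a) list" where
  "rm1 a xs = map (\<lambda>(p, q). (p * a, q)) xs"

definition rm2 :: "'a::ring \<Rightarrow> ('a \<times> 'a) list \<Rightarrow> ('a \<times> 'a) list" where
  "rm2 b xs = map (\<lambda>(p, q). (p, q * b)) xs"

definition lm :: "('a \<Rightarrow> 'a) \<Rightarrow> ('a \<Rightarrow> 'a) \<Rightarrow> ('a \<times> 'a) list \<Rightarrow> ('a \<times> 'a) list" where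
  "lm f g xs = map (\<lambda>(p, q). (f p, g q)) xs"

text \<open>Linear endomorphisms of _D A (x) A^D, represented by maps on representatives
  compatible with the quotient.\<close>
definition tendo :: "(complex \<Rightarrow> 'a::ring \<Rightarrow> 'a) \<Rightarrow> 'b set \<Rightarrow> ('b \<Rightarrow> 'a \<Rightarrow> 'a) \<Rightarrow> ('b \<Rightarrow> 'a \<Rightarrow> 'a)
    \<Rightarrow> (('a \<times> 'a) list \<Rightarrow> ('a \<times> 'a) list) \<Rightarrow> bool" where
  "tendo sc D s t T \<longleftrightarrow>
     (\<forall>xs ys. tens_eq sc D s t xs ys \<longrightarrow> tens_eq sc D s t (T xs) (T ys)) \<and>
     (\<forall>xs ys. tens_eq sc D s t (T (xs @ ys)) (T xs @ T ys)) \<and>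
     (\<forall>c xs. tens_eq sc D s t (T (tscale sc c xs)) (tscale sc c (T xs)))"

text \<open>X represents T(a (x) 1), i.e. T(a (x) b) = X (1 (x) b) for all b.\<close>
definition rep_left :: "(complex \<Rightarrow> 'a::ring \<Rightarrow> 'a) \<Rightarrow> 'b set \<Rightarrow> ('b \<Rightarrow> 'a \<Rightarrow> 'a) \<Rightarrow> ('b \<Rightarrow> 'a \<Rightarrow> 'a)
    \<Rightarrow> (('a \<times> 'a) list \<Rightarrow> ('a \<times> 'a) list) \<Rightarrow> 'a \<Rightarrow> ('a \<times> 'a) list \<Rightarrow> bool" where
  "rep_left sc D s t T a X \<longleftrightarrow> (\<forall>b. tens_eq sc D s t (T [(a, b)]) (rm2 b X))"

text \<open>Y represents T(1 (x) b), i.e. T(a (x) b) = Y (a (x) 1) for all a.\<close>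
definition rep_right :: "(complex \<Rightarrow> 'a::ring \<Rightarrow> 'a) \<Rightarrow> 'b set \<Rightarrow> ('b \<Rightarrow> 'a \<Rightarrow> 'a) \<Rightarrow> ('b \<Rightarrow> 'a \<Rightarrow> 'a)
    \<Rightarrow> (('a \<times> 'a) list \<Rightarrow> ('a \<times> 'a) list) \<Rightarrow> 'a \<Rightarrow> ('a \<times> 'a) list \<Rightarrow> bool" where
  "rep_right sc D s t T b Y \<longleftrightarrow> (\<forall>a. tens_eq sc D s t (T [(a, b)]) (rm1 a Y))"

definition takeuchi :: "(complex \<Rightarrow> 'a::ring \<Rightarrow> 'a) \<Rightarrow> 'b set \<Rightarrow> ('b \<Rightarrow> 'a \<Rightarrow> 'a) \<Rightarrow> ('b \<Rightarrow> 'a \<Rightarrow> 'a)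
    \<Rightarrow> (('a \<times> 'a) list \<Rightarrow> ('a \<times> 'a) list) \<Rightarrow> bool" where
  "takeuchi sc D s t T \<longleftrightarrow> tendo sc D s t T \<and>
     (\<forall>a. \<exists>X. rep_left sc D s t T a X) \<and> (\<forall>b. \<exists>Y. rep_right sc D s t T b Y)"

definition teq :: "(complex \<Rightarrow> 'a::ring \<Rightarrow> 'a) \<Rightarrow> 'b set \<Rightarrow> ('b \<Rightarrow> 'a \<Rightarrow> 'a) \<Rightarrow> ('b \<Rightarrow> 'a \<Rightarrow> 'a)
    \<Rightarrow> (('a \<times> 'a) list \<Rightarrow> ('a \<times> 'a) list) \<Rightarrow> (('a \<times> 'a) list \<Rightarrow> ('a \<times> 'a) list) \<Rightarrow> bool" where
  "teq sc D s t T T' \<longleftrightarrow> (\<forall>xs. tens_eq sc D s t (T xs) (T' xs))"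

definition left_mult_bialgebroid ::
  "(complex \<Rightarrow> 'a::ring \<Rightarrow> 'a) \<Rightarrow> (complex \<Rightarrow> 'b::ring \<Rightarrow> 'b) \<Rightarrow> 'b set
   \<Rightarrow> ('b \<Rightarrow> 'a \<Rightarrow> 'a) \<Rightarrow> ('b \<Rightarrow> 'a \<Rightarrow> 'a) \<Rightarrow> ('a \<Rightarrow> ('a \<times> 'a) list \<Rightarrow> ('a \<times> 'a) list) \<Rightarrow> bool" where
  "left_mult_bialgebroid scA scB D s t \<Delta> \<longleftrightarrow>
     \<comment> \<open>(i)\<close>
     calg scA \<and> calg scB \<and> subalg scB D \<and>
     right_nondeg TYPE('a) \<and> idempotent_alg TYPE('a) \<and>
     \<comment> \<open>(ii)\<close>
     (\<forall>x\<in>D. inM scA (s x) \<and> inM scA (t x)) \<and>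
     (\<forall>x\<in>D. \<forall>y\<in>D. s (x * y) = s x \<circ> s y \<and> s (x + y) = (\<lambda>a. s x a + s y a)) \<and>
     (\<forall>x\<in>D. \<forall>c. s (scB c x) = (\<lambda>a. scA c (s x a))) \<and>
     (\<forall>x\<in>D. \<forall>y\<in>D. t (x * y) = t y \<circ> t x \<and> t (x + y) = (\<lambda>a. t x a + t y a)) \<and>
     (\<forall>x\<in>D. \<forall>c. t (scB c x) = (\<lambda>a. scA c (t x a))) \<and>
     (\<forall>x\<in>D. \<forall>y\<in>D. s x \<circ> t y = t y \<circ> s x) \<and>
     inj_on s D \<and> inj_on t D \<and> gen_by D s \<and> gen_by D t \<and>
     (\<forall>X. (\<forall>a. tens_eq scA D s t (rm1 a X) []) \<longrightarrow> tens_eq scA D s t X []) \<and>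
     (\<forall>X. (\<forall>a. tens_eq scA D s t (rm2 a X) []) \<longrightarrow> tens_eq scA D s t X []) \<and>
     \<comment> \<open>(iii)\<close>
     (\<forall>a. takeuchi scA D s t (\<Delta> a)) \<and>
     (\<forall>a b. teq scA D s t (\<Delta> (a * b)) (\<Delta> a \<circ> \<Delta> b)) \<and>
     (\<forall>a b. teq scA D s t (\<Delta> (a + b)) (\<lambda>xs. \<Delta> a xs @ \<Delta> b xs)) \<and>
     (\<forall>c a. teq scA D s t (\<Delta> (scA c a)) (\<lambda>xs. tscale scA c (\<Delta> a xs))) \<and>
     \<comment> \<open>(iv)\<close>
     (\<forall>x\<in>D. \<forall>y\<in>D. \<forall>x'\<in>D. \<forall>y'\<in>D. \<forall>a.
        teq scA D s t (\<Delta> (rmul (s x (t y a)) (s x' \<circ> t y')))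
          (\<lambda>xs. lm (t y) (s x) (\<Delta> a (lm (t y') (s x') xs)))) \<and>
     \<comment> \<open>(v)\<close>
     (\<forall>a b c ps us fs gs.
        rep_right scA D s t (\<Delta> b) c ps \<and> rep_left scA D s t (\<Delta> b) a us \<and>
        length fs = length ps \<and> (\<forall>i<length ps. rep_left scA D s t (\<Delta> (fst (ps ! i))) a (fs ! i)) \<and>
        length gs = length us \<and> (\<forall>j<length us. rep_right scA D s t (\<Delta> (snd (us ! j))) c (gs ! j))
        \<longrightarrow> tens3_eq scA D s t
              (concat (map2 (\<lambda>(p, q) f. map (\<lambda>(x, y). (x, y, q)) f) ps fs))
              (concat (map2 (\<lambda>(u, v) g. map (\<lambda>(x, y). (u, x, y)) g) us gs)))"

text \<open>Left counits. T_rho(a (x) b) = Delta(a)(1 (x) b), T_lambda(a (x) b) = Delta(b)(a (x) 1).\<close>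
definition left_counit ::
  "(complex \<Rightarrow> 'a::ring \<Rightarrow> 'a) \<Rightarrow> (complex \<Rightarrow> 'b::ring \<Rightarrow> 'b) \<Rightarrow> 'b set
   \<Rightarrow> ('b \<Rightarrow> 'a \<Rightarrow> 'a) \<Rightarrow> ('b \<Rightarrow> 'a \<Rightarrow> 'a) \<Rightarrow> ('a \<Rightarrow> ('a \<times> 'a) list \<Rightarrow> ('a \<times> 'a) list)
   \<Rightarrow> ('a \<Rightarrow> 'b) \<Rightarrow> bool" where
  "left_counit scA scB D s t \<Delta> \<epsilon> \<longleftrightarrow>
     (\<forall>a. \<epsilon> a \<in> D) \<and>
     (\<forall>a b. \<epsilon> (a + b) = \<epsilon> a + \<epsilon> b) \<and> (\<forall>c a. \<epsilon> (scA c a) = scB c (\<epsilon> a)) \<and>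
     (\<forall>x\<in>D. \<forall>a. \<epsilon> (s x a) = x * \<epsilon> a) \<and>
     (\<forall>y\<in>D. \<forall>a. \<epsilon> (t y a) = \<epsilon> a * y) \<and>
     (\<forall>a b cs. rep_right scA D s t (\<Delta> a) b cs \<longrightarrow>
        sum_list (map (\<lambda>(c, d). t (\<epsilon> c) d) cs) = a * b) \<and>
     (\<forall>a b cs. rep_left scA D s t (\<Delta> b) a cs \<longrightarrow>
        sum_list (map (\<lambda>(c, d). s (\<epsilon> d) c) cs) = b * a)"

end

theory Submission
  imports Defs
begin

text \<open>Write \<open>a = \<Sum> s(y\<^sub>i) c\<^sub>i\<close> with \<open>y\<^sub>i \<in> B\<^sub>0\<close>. For any \<open>x \<in> B\<close> the elements \<open>x y\<^sub>i\<close> lie in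
  the ideal \<open>B\<^sub>0\<close>, so
  \<open>s(x) a \<otimes> b = \<Sum> s(x y\<^sub>i) c\<^sub>i \<otimes> b \<equiv> \<Sum> c\<^sub>i \<otimes> t(y\<^sub>i) t(x) b \<equiv> a \<otimes> t(x) b\<close>
  using only \<open>B\<^sub>0\<close>-balancing relations; the same works in each pair of adjacent factors of
  \<open>A \<otimes> A \<otimes> A\<close>. Hence balancing over \<open>B\<^sub>0\<close> and over \<open>B\<close> give the same quotients, every
  axiom of a left multiplier bialgebroid over \<open>B\<close> restricts to \<open>B\<^sub>0\<close>, and a left counit
  satisfies \<open>\<epsilon>(a) = \<Sum> y\<^sub>i \<epsilon>(c\<^sub>i) \<in> B\<^sub>0\<close>.\<close>

lemma gen_by_induct [consumes 1, case_names zero add gen]: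
  assumes "gen_by D f"
    and "P 0"
    and "\<And>a b. P a \<Longrightarrow> P b \<Longrightarrow> P (a + b)"
    and "\<And>x b. x \<in> D \<Longrightarrow> P (f x b)"
  shows "P a"
proof -
  obtain l where l: "\<forall>x\<in>fst ` set l. x \<in> D" "a = (\<Sum>(x, b)\<leftarrow>l. f x b)"
    using assms(1) unfolding gen_by_def by blast
  have "P (\<Sum>(x, b)\<leftarrow>l. f x b)" using l(1)
  proof (induction l)
    case (Cons p l)
    then show ?case by (cases p) (auto intro: assms(3,4))
  qed (simp add: assms(2))
  then show ?thesis using l(2) by simp
qed

lemma cspan_superset: "g \<in> S \<Longrightarrow> g \<in> cspan S"
  unfolding cspan_def by (rule CollectI, rule exI[of _ "[(1, g)]"]) auto

lemma cspan_zero: "(\<lambda>k. 0) \<in> cspan S"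
  unfolding cspan_def by (rule CollectI, rule exI[of _ "[]"]) auto

lemma cspan_add:
  assumes "f \<in> cspan S" "g \<in> cspan S"
  shows "(\<lambda>k. f k + g k) \<in> cspan S"
proof -
  obtain lf where "\<forall>g\<in>snd ` set lf. g \<in> S" "f = (\<lambda>k. \<Sum>(c, g)\<leftarrow>lf. c * g k)"
    using assms(1) unfolding cspan_def by blast
  moreover obtain lg where "\<forall>g\<in>snd ` set lg. g \<in> S" "g = (\<lambda>k. \<Sum>(c, g)\<leftarrow>lg. c * g k)"
    using assms(2) unfolding cspan_def by blast
  ultimately show ?thesis
    unfolding cspan_def by (intro CollectI exI[of _ "lf @ lg"]) auto
qed

lemma sum_list_scale_coeffs:
  "sum_list (map ((\<lambda>(c, g). c * g k) \<circ> (\<lambda>(d, g). (c' * d, g))) l) =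
    (c' :: complex) * (\<Sum>(c, g)\<leftarrow>l. c * g k)"
  by (induction l) (auto simp: algebra_simps)

lemma cspan_scale:
  assumes "f \<in> cspan S"
  shows "(\<lambda>k. c * f k) \<in> cspan S"
proof -
  obtain l where "\<forall>g\<in>snd ` set l. g \<in> S" "f = (\<lambda>k. \<Sum>(c, g)\<leftarrow>l. c * g k)"
    using assms unfolding cspan_def by blast
  then show ?thesis
    unfolding cspan_def
    by (intro CollectI exI[of _ "map (\<lambda>(d, g). (c * d, g)) l"]) (auto simp: sum_list_scale_coeffs)
qed

lemma cspan_subset_cspan:
  assumes "S \<subseteq> cspan T"
  shows "cspan S \<subseteq> cspan T"
proof
  fix f assume "f \<in> cspan S"
  then obtain l where l: "\<forall>g\<in>snd ` set l. g \<in> S" "f = (\<lambda>k. \<Sum>(c, g)\<leftarrow>l. c * g k)"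
    unfolding cspan_def by blast
  have "(\<lambda>k. \<Sum>(c, g)\<leftarrow>l. c * g k) \<in> cspan T" using l(1)
  proof (induction l)
    case Nil
    then show ?case using cspan_zero by simp
  next
    case (Cons p l)
    obtain c g where p: "p = (c, g)" by force
    have "(\<lambda>k. c * g k) \<in> cspan T" using Cons.prems p assms by (auto intro: cspan_scale)
    with Cons p show ?case using cspan_add by fastforce
  qed
  with l(2) show "f \<in> cspan T" by simp
qed

lemma cspan_eqI: "S \<subseteq> T \<Longrightarrow> T \<subseteq> cspan S \<Longrightarrow> cspan S = cspan T"
  using cspan_subset_cspan[of S T] cspan_subset_cspan[of T S] cspan_superset by blast

definition eq_mod_span :: "('k \<Rightarrow> complex) set \<Rightarrow> ('k \<Rightarrow> complex) \<Rightarrow> ('k \<Rightarrow> complex) \<Rightarrow> bool" where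
  "eq_mod_span S f g \<longleftrightarrow> (\<lambda>k. f k - g k) \<in> cspan S"

lemma eq_mod_span_sym: "eq_mod_span S f g \<Longrightarrow> eq_mod_span S g f"
  unfolding eq_mod_span_def by (drule cspan_scale[where c = "-1"]) (simp add: algebra_simps)

lemma eq_mod_span_trans [trans]: "eq_mod_span S f g \<Longrightarrow> eq_mod_span S g h \<Longrightarrow> eq_mod_span S f h"
  unfolding eq_mod_span_def by (drule (1) cspan_add) (simp add: algebra_simps)

lemma eq_mod_span_add:
  "eq_mod_span S f f' \<Longrightarrow> eq_mod_span S g g' \<Longrightarrow>
    eq_mod_span S (\<lambda>k. f k + g k) (\<lambda>k. f' k + g' k)"
  unfolding eq_mod_span_def by (drule (1) cspan_add) (simp add: algebra_simps)

lemma eq_mod_spanI: "(\<lambda>k. f k - g k) \<in> S \<Longrightarrow> eq_mod_span S f g"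
  unfolding eq_mod_span_def by (rule cspan_superset)

lemma eq_mod_span_sumI: "(\<lambda>k. f k - g k - h k) \<in> S \<Longrightarrow> eq_mod_span S f (\<lambda>k. g k + h k)"
  unfolding eq_mod_span_def by (drule cspan_superset) (simp add: diff_diff_eq)

lemma eq_mod_span_additive_zero:
  assumes "\<And>p p'. eq_mod_span R (fv [P (p + p')]) (\<lambda>k. fv [P p] k + fv [P p'] k)"
  shows "eq_mod_span R (fv [P (0 :: 'a :: monoid_add)]) (\<lambda>k. 0)"
proof -
  have "(\<lambda>k. - fv [P 0] k) \<in> cspan R"
    using assms[of 0 0] unfolding eq_mod_span_def by simp
  from cspan_scale[OF this, of "-1"] show ?thesis
    unfolding eq_mod_span_def by simp
qed

lemma rel2_mono: "D \<subseteq> D' \<Longrightarrow> rel2 sc D s t \<subseteq> rel2 sc D' s t"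
  unfolding rel2_def by (intro Un_mono subset_refl) blast

lemma rel3_mono: "D \<subseteq> D' \<Longrightarrow> rel3 sc D s t \<subseteq> rel3 sc D' s t"
  unfolding rel3_def by (intro Un_mono subset_refl) blast+

lemma rel3_add_firstI:
  "(\<lambda>k. fv [(a + a', b, d)] k - fv [(a, b, d)] k - fv [(a', b, d)] k) \<in> rel3 sc D s t"
  unfolding rel3_def by (intro UnI1) blast

lemma rel3_add_secondI:
  "(\<lambda>k. fv [(a, b + b', d)] k - fv [(a, b, d)] k - fv [(a, b', d)] k) \<in> rel3 sc D s t"
  unfolding rel3_def by (rule UnI1, rule UnI1, rule UnI1, rule UnI1, rule UnI1, rule UnI1, rule UnI2) blast

lemma rel3_balance_firstI:
  "x \<in> D \<Longrightarrow> (\<lambda>k. fv [(s x a, b, d)] k - fv [(a, t x b, d)] k) \<in> rel3 sc D s t"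
  unfolding rel3_def by (rule UnI1, rule UnI2) blast

lemma rel3_balance_secondI:
  "x \<in> D \<Longrightarrow> (\<lambda>k. fv [(a, s x b, d)] k - fv [(a, b, t x d)] k) \<in> rel3 sc D s t"
  unfolding rel3_def by (rule UnI2) blast

locale generating_ideal =
  fixes s t :: "'b::ring \<Rightarrow> 'a::ring \<Rightarrow> 'a" and D B0 :: "'b set"
  assumes ideal_subset: "B0 \<subseteq> D"
    and ideal_mult: "x \<in> D \<Longrightarrow> y \<in> B0 \<Longrightarrow> x * y \<in> B0"
    and s_mult: "x \<in> D \<Longrightarrow> y \<in> B0 \<Longrightarrow> s (x * y) = s x \<circ> s y"
    and t_mult: "x \<in> D \<Longrightarrow> y \<in> B0 \<Longrightarrow> t (x * y) = t y \<circ> t x"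
    and s_add: "x \<in> D \<Longrightarrow> s x (a + a') = s x a + s x a'"
    and generates: "gen_by B0 s"
begin

text \<open>\<open>P p q\<close> puts \<open>p\<close> and \<open>q\<close> into two adjacent tensor factors, keeping the others fixed.\<close>
lemma balance_extends:
  assumes additive: "\<And>p p' q. eq_mod_span R (fv [P (p + p') q]) (\<lambda>k. fv [P p q] k + fv [P p' q] k)"
    and balance: "\<And>y p q. y \<in> B0 \<Longrightarrow> eq_mod_span R (fv [P (s y p) q]) (fv [P p (t y q)])"
    and "x \<in> D"
  shows "eq_mod_span R (fv [P (s x p) q]) (fv [P p (t x q)])"
  using generates
proof (induction p rule: gen_by_induct)
  case zero
  have "s x 0 = 0" using s_add[OF \<open>x \<in> D\<close>, of 0 0] by simp
  moreover have "eq_mod_span R (fv [P 0 q']) (\<lambda>k. 0)" for q'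
    using eq_mod_span_additive_zero[of R "\<lambda>p. P p q'"] additive by blast
  ultimately show ?case by (metis eq_mod_span_sym eq_mod_span_trans)
next
  case (add p p')
  have "eq_mod_span R (fv [P (s x p + s x p') q]) (\<lambda>k. fv [P (s x p) q] k + fv [P (s x p') q] k)"
    by (rule additive)
  also have "eq_mod_span R \<dots> (\<lambda>k. fv [P p (t x q)] k + fv [P p' (t x q)] k)"
    using add.IH by (rule eq_mod_span_add)
  also have "eq_mod_span R \<dots> (fv [P (p + p') (t x q)])"
    by (rule eq_mod_span_sym, rule additive)
  finally show ?case
    using s_add[OF \<open>x \<in> D\<close>] eq_mod_span_trans by auto
next
  case (gen y c)
  have "eq_mod_span R (fv [P (s x (s y c)) q]) (fv [P c (t y (t x q))])"
    using balance[OF ideal_mult[OF \<open>x \<in> D\<close> gen]] s_mult[OF \<open>x \<in> D\<close> gen]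
      t_mult[OF \<open>x \<in> D\<close> gen]
    by simp
  also have "eq_mod_span R \<dots> (fv [P (s y c) (t x q)])"
    using gen by (rule eq_mod_span_sym[OF balance])
  finally show ?case .
qed

lemma cspan_rel2_eq: "cspan (rel2 sc B0 s t) = cspan (rel2 sc D s t)"
proof (rule cspan_eqI)
  show "rel2 sc B0 s t \<subseteq> rel2 sc D s t"
    using ideal_subset by (rule rel2_mono)
  have "eq_mod_span (rel2 sc B0 s t) (fv [(s x a, b)]) (fv [(a, t x b)])" if "x \<in> D" for x a b
  proof (rule balance_extends[where P = Pair, OF _ _ that])
    show "eq_mod_span (rel2 sc B0 s t) (fv [(p + p', q)]) (\<lambda>k. fv [(p, q)] k + fv [(p', q)] k)"
      for p p' q by (rule eq_mod_span_sumI) (unfold rel2_def, blast)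
    show "eq_mod_span (rel2 sc B0 s t) (fv [(s y p, q)]) (fv [(p, t y q)])" if "y \<in> B0" for y p q
      by (rule eq_mod_spanI) (unfold rel2_def, use that in blast)
  qed
  moreover have "h \<in> rel2 sc B0 s t \<or> (\<exists>x\<in>D. \<exists>a b. h = (\<lambda>k. fv [(s x a, b)] k - fv [(a, t x b)] k))"
    if "h \<in> rel2 sc D s t" for h
    using that unfolding rel2_def by blast
  ultimately show "rel2 sc D s t \<subseteq> cspan (rel2 sc B0 s t)"
    unfolding eq_mod_span_def by (blast intro: cspan_superset)
qed

lemma cspan_rel3_eq: "cspan (rel3 sc B0 s t) = cspan (rel3 sc D s t)"
proof (rule cspan_eqI)
  show "rel3 sc B0 s t \<subseteq> rel3 sc D s t"
    using ideal_subset by (rule rel3_mono)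
  have "eq_mod_span (rel3 sc B0 s t) (fv [(s x a, b, d)]) (fv [(a, t x b, d)])"
    if "x \<in> D" for x a b d
  proof (rule balance_extends[where P = "\<lambda>p q. (p, q, d)", OF _ _ that])
    show "eq_mod_span (rel3 sc B0 s t) (fv [(p + p', q, d)]) (\<lambda>k. fv [(p, q, d)] k + fv [(p', q, d)] k)"
      for p p' q by (rule eq_mod_span_sumI, rule rel3_add_firstI)
    show "eq_mod_span (rel3 sc B0 s t) (fv [(s y p, q, d)]) (fv [(p, t y q, d)])"
      if "y \<in> B0" for y p q
      using that by (rule eq_mod_spanI[OF rel3_balance_firstI])
  qed
  moreover have "eq_mod_span (rel3 sc B0 s t) (fv [(a, s x b, d)]) (fv [(a, b, t x d)])"
    if "x \<in> D" for x a b d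
  proof (rule balance_extends[where P = "\<lambda>p q. (a, p, q)", OF _ _ that])
    show "eq_mod_span (rel3 sc B0 s t) (fv [(a, p + p', q)]) (\<lambda>k. fv [(a, p, q)] k + fv [(a, p', q)] k)"
      for p p' q by (rule eq_mod_span_sumI, rule rel3_add_secondI)
    show "eq_mod_span (rel3 sc B0 s t) (fv [(a, s y p, q)]) (fv [(a, p, t y q)])"
      if "y \<in> B0" for y p q
      using that by (rule eq_mod_spanI[OF rel3_balance_secondI])
  qed
  moreover have "h \<in> rel3 sc B0 s t
      \<or> (\<exists>x\<in>D. \<exists>a b d. h = (\<lambda>k. fv [(s x a, b, d)] k - fv [(a, t x b, d)] k))
      \<or> (\<exists>x\<in>D. \<exists>a b d. h = (\<lambda>k. fv [(a, s x b, d)] k - fv [(a, b, t x d)] k))"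
    if "h \<in> rel3 sc D s t" for h
    using that unfolding rel3_def by blast
  ultimately show "rel3 sc D s t \<subseteq> cspan (rel3 sc B0 s t)"
    unfolding eq_mod_span_def by (blast intro: cspan_superset)
qed

lemma tens_eq_restrict: "tens_eq sc B0 s t = tens_eq sc D s t"
  by (simp add: tens_eq_def cspan_rel2_eq fun_eq_iff)

lemma tens3_eq_restrict: "tens3_eq sc B0 s t = tens3_eq sc D s t"
  by (simp add: tens3_eq_def cspan_rel3_eq fun_eq_iff)

end

lemma takeuchi_notions_eq_if_tens_eq_eq:
  assumes "tens_eq sc D' s t = tens_eq sc D s t"
  shows "rep_left sc D' s t = rep_left sc D s t" and "rep_right sc D' s t = rep_right sc D s t"
    and "takeuchi sc D' s t = takeuchi sc D s t" and "teq sc D' s t = teq sc D s t"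
  using assms by (simp_all add: fun_eq_iff rep_left_def rep_right_def takeuchi_def tendo_def teq_def)

lemma left_mult_bialgebroid_restrict_base:
  assumes "left_mult_bialgebroid scA scB D s t \<Delta>"
    and "subalg scB D'" and "D' \<subseteq> D" and "gen_by D' s" and "gen_by D' t"
    and tens: "tens_eq scA D' s t = tens_eq scA D s t"
    and tens3: "tens3_eq scA D' s t = tens3_eq scA D s t"
  shows "left_mult_bialgebroid scA scB D' s t \<Delta>"
  using assms(1,3)
  unfolding left_mult_bialgebroid_def tens tens3 takeuchi_notions_eq_if_tens_eq_eq[OF tens]
  apply (elim conjE)
  apply (intro conjI)
  apply (assumption | rule assms(2,4,5) | erule inj_on_subset, rule assms(3)
      | (intro ballI; simp add: subsetD[OF assms(3)]))+
  done

lemma left_counit_restrict_base: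
  assumes "left_counit scA scB D s t \<Delta> \<epsilon>"
    and "range \<epsilon> \<subseteq> D'" and "D' \<subseteq> D"
    and tens: "tens_eq scA D' s t = tens_eq scA D s t"
  shows "left_counit scA scB D' s t \<Delta> \<epsilon>"
  using assms(1-3)
  unfolding left_counit_def takeuchi_notions_eq_if_tens_eq_eq[OF tens]
  by blast

lemma left_counit_range_ideal:
  assumes "left_counit scA scB D s t \<Delta> \<epsilon>"
    and "two_sided_ideal scB B0" and "B0 \<subseteq> D" and "gen_by B0 s"
  shows "\<epsilon> a \<in> B0"
  using assms(4)
proof (induction a rule: gen_by_induct)
  case zero
  have "\<epsilon> 0 = 0"
    using assms(1) unfolding left_counit_def by (metis add_cancel_right_right add_0)
  then show ?case using assms(2) unfolding two_sided_ideal_def by simp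
next
  case (add a b)
  then show ?case using assms(1,2) unfolding left_counit_def two_sided_ideal_def by simp
next
  case (gen x b)
  then show ?case using assms(1-3) unfolding left_counit_def two_sided_ideal_def by auto
qed

theorem lemma3p7:
  fixes scA :: "complex \<Rightarrow> 'a::ring \<Rightarrow> 'a" and scB :: "complex \<Rightarrow> 'b::ring \<Rightarrow> 'b"
    and s t :: "'b \<Rightarrow> 'a \<Rightarrow> 'a" and \<Delta> :: "'a \<Rightarrow> ('a \<times> 'a) list \<Rightarrow> ('a \<times> 'a) list"
    and B0 :: "'b set"
  assumes "left_mult_bialgebroid scA scB UNIV s t \<Delta>"
    and "two_sided_ideal scB B0"
    and "gen_by B0 s" and "gen_by B0 t"
  shows "(\<forall>xs ys. tens_eq scA B0 s t xs ys \<longleftrightarrow> tens_eq scA UNIV s t xs ys)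
    \<and> left_mult_bialgebroid scA scB B0 s t \<Delta>
    \<and> (\<forall>\<epsilon>. left_counit scA scB UNIV s t \<Delta> \<epsilon> \<longrightarrow>
          range \<epsilon> \<subseteq> B0 \<and> left_counit scA scB B0 s t \<Delta> \<epsilon>)"
proof -
  have s_multiplier: "inM scA (s x)" and s_mult: "s (x * y) = s x \<circ> s y"
    and t_mult: "t (x * y) = t y \<circ> t x" for x y
    using assms(1) unfolding left_mult_bialgebroid_def by simp_all
  interpret generating_ideal s t UNIV B0
    using assms(2,3) s_multiplier s_mult t_mult
    by unfold_locales (auto simp: two_sided_ideal_def inM_def inL_def)
  have subalg: "subalg scB B0"
    using assms(2) unfolding two_sided_ideal_def subalg_def by blast
  have counit: "range \<epsilon> \<subseteq> B0 \<and> left_counit scA scB B0 s t \<Delta> \<epsilon>"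
    if "left_counit scA scB UNIV s t \<Delta> \<epsilon>" for \<epsilon>
    using that assms(2,3) tens_eq_restrict
    by (meson left_counit_range_ideal left_counit_restrict_base image_subsetI subset_UNIV)
  show ?thesis
    using left_mult_bialgebroid_restrict_base[OF assms(1) subalg subset_UNIV assms(3,4)]
      tens_eq_restrict tens3_eq_restrict counit
    by simp
qed

end
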